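(* Let $s\in[-\infty,0]$, let $\rho$ be a $2\times2$ density matrix and $X,Y$ be $2\times2$ Hermitian matrices. Then $|\operatorname{Re}\zeta_\rho^s(X,Y)|^2\le I^s(\rho,X)\,I^s(\rho,Y)\le|\zeta_\rho^s(X,Y)|^2,$ where $\operatorname{Re}\zeta_\rho^s(X,Y)=\frac14\left(I^s(\rho,X+Y)-I^s(\rho,X-Y)\right)$ and $\operatorname{Im}\zeta_\rho^s(X,Y)=\frac{1}{2i}\mathrm{Tr}\big[\rho[X,Y]\big]$.
   Context: Write $\rho=\sum_{i=1}^2\lambda_i|\psi_i\rangle\langle\psi_i|$ (orthonormal eigenbasis, $\lambda_1\ge\lambda_2\ge0$). For $-\infty<s<0$ and $a_1,a_2>0$ let $m_s(a_1,a_2)=\left(\frac{a_1^s+a_2^s}{2}\right)^{1/s}$; $m_0(a_1,a_2)=\sqrt{a_1a_2}$; $m_{-\infty}(a_1,a_2)=\min\{a_1,a_2\}$; and $m_s(a,0)=m_s(0,a)=m_s(0,0)=0$. Define $\zeta_\rho^s(X,Y)=\mathrm{Tr}[\rho X^\dagger Y]-\sum_{i,j} m_s(\lambda_i,\lambda_j)\langle\psi_i|X^\dagger|\psi_j\rangle\langle\psi_j|Y|\psi_i\rangle$ and $I^s(\rho,X)=\zeta_\rho^s(X,X)$. $[X,Y]=XY-YX$. *)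

theory Defs
  imports "HOL-Analysis.Analysis"
begin

definition cadj :: "complex^2^2 \<Rightarrow> complex^2^2" where
  "cadj A = (\<chi> i j. cnj (A $ j $ i))"

definition ctrace :: "complex^2^2 \<Rightarrow> complex" where
  "ctrace A = (\<Sum>i\<in>UNIV. A $ i $ i)"

definition hermitian2 :: "complex^2^2 \<Rightarrow> bool" where
  "hermitian2 A \<longleftrightarrow> cadj A = A"

definition braket :: "complex^2 \<Rightarrow> complex^2^2 \<Rightarrow> complex^2 \<Rightarrow> complex" where
  "braket u A v = (\<Sum>i\<in>UNIV. cnj (u $ i) * (A *v v) $ i)"

definition cinner2 :: "complex^2 \<Rightarrow> complex^2 \<Rightarrow> complex" where
  "cinner2 u v = (\<Sum>i\<in>UNIV. cnj (u $ i) * v $ i)"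

definition ketbra :: "complex^2 \<Rightarrow> complex^2 \<Rightarrow> complex^2^2" where
  "ketbra u v = (\<chi> i j. u $ i * cnj (v $ j))"

definition psd2 :: "complex^2^2 \<Rightarrow> bool" where
  "psd2 A \<longleftrightarrow> hermitian2 A \<and> (\<forall>v. 0 \<le> Re (braket v A v))"

definition density2 :: "complex^2^2 \<Rightarrow> bool" where
  "density2 \<rho> \<longleftrightarrow> psd2 \<rho> \<and> ctrace \<rho> = 1"

definition msmean :: "ereal \<Rightarrow> real \<Rightarrow> real \<Rightarrow> real" where
  "msmean s a b =
     (if a = 0 \<or> b = 0 then 0
      else if s = -\<infinity> then min a b
      else if s = 0 then sqrt (a * b)
      else ((a powr real_of_ereal s + b powr real_of_ereal s) / 2) powr (1 / real_of_ereal s))"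

text \<open>\<zeta>_\<rho>^s(X,Y), where \<rho> = \<Sum>_{i\<in>{1,2}} lam i |psi i\<rangle>\<langle>psi i|.\<close>
definition zeta :: "ereal \<Rightarrow> complex^2^2 \<Rightarrow> (nat \<Rightarrow> real) \<Rightarrow> (nat \<Rightarrow> complex^2)
                    \<Rightarrow> complex^2^2 \<Rightarrow> complex^2^2 \<Rightarrow> complex" where
  "zeta s \<rho> lam psi X Y =
     ctrace (\<rho> ** cadj X ** Y)
     - (\<Sum>i\<in>{1,2}. \<Sum>j\<in>{1,2}. complex_of_real (msmean s (lam i) (lam j))
           * braket (psi i) (cadj X) (psi j) * braket (psi j) Y (psi i))"

definition Is :: "ereal \<Rightarrow> complex^2^2 \<Rightarrow> (nat \<Rightarrow> real) \<Rightarrow> (nat \<Rightarrow> complex^2)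
                    \<Rightarrow> complex^2^2 \<Rightarrow> complex" where
  "Is s \<rho> lam psi X = zeta s \<rho> lam psi X X"

end

theory Submission
  imports Defs
begin

(* In the eigenbasis of rho the diagonal terms of zeta cancel, because m_s(l,l) = l.  Writing
   u = <psi1|X|psi2>, v = <psi1|Y|psi2> and m = m_s(l1,l2), what remains is
   zeta(X,Y) = a u cnj(v) + b cnj(u) v  with  a = l1 - m >= 0 >= b = l2 - m.
   Hence Re zeta = (a+b) Re(u cnj v), Im zeta = (a-b) Im(u cnj v) and I(X) = (a+b)|u|^2, so the
   lower bound is Cauchy-Schwarz and the upper bound is (a+b)^2 <= (a-b)^2.  Finally
   Tr(rho [X,Y]) = 2i (l1 - l2) Im(u cnj v), and a - b = l1 - l2. *)

lemma braket_add: "braket u (A + B) v = braket u A v + braket u B v"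
  unfolding braket_def by (simp add: matrix_vector_mult_def sum_2 algebra_simps)

lemma braket_diff: "braket u (A - B) v = braket u A v - braket u B v"
  unfolding braket_def by (simp add: matrix_vector_mult_def sum_2 algebra_simps)

lemma braket_cadj: "braket v (cadj A) u = cnj (braket u A v)"
  unfolding braket_def cadj_def by (simp add: matrix_vector_mult_def sum_2 algebra_simps)

lemma braket_hermitian_swap: "hermitian2 A \<Longrightarrow> braket v A u = cnj (braket u A v)"
  using braket_cadj[of v A u] unfolding hermitian2_def by simp

lemma hermitian2_add: "hermitian2 A \<Longrightarrow> hermitian2 B \<Longrightarrow> hermitian2 (A + B)"
  unfolding hermitian2_def cadj_def by (simp add: vec_eq_iff)

lemma hermitian2_diff: "hermitian2 A \<Longrightarrow> hermitian2 B \<Longrightarrow> hermitian2 (A - B)"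
  unfolding hermitian2_def cadj_def by (simp add: vec_eq_iff)

lemma cinner2_swap: "cinner2 v u = cnj (cinner2 u v)"
  unfolding cinner2_def by (simp add: sum_2 mult.commute)

lemma ketbra_orthonormal_resolution:
  assumes "cinner2 p p = 1" "cinner2 q q = 1" "cinner2 p q = 0"
  shows "ketbra p p + ketbra q q = mat 1"
proof -
  define U :: "complex^2^2" where "U = (\<chi> i k. if k = 1 then p $ i else q $ i)"
  have "cinner2 q p = 0"
    using assms(3) cinner2_swap[of q p] by simp
  then have "cadj U ** U = mat 1"
    using assms unfolding U_def cadj_def cinner2_def
    by (simp add: matrix_matrix_mult_def vec_eq_iff forall_2 sum_2 mat_def mult.commute)
  then have "U ** cadj U = mat 1"
    using matrix_left_right_inverse by blast
  moreover have "U ** cadj U = ketbra p p + ketbra q q"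
    unfolding U_def cadj_def ketbra_def by (simp add: matrix_matrix_mult_def vec_eq_iff sum_2)
  ultimately show ?thesis by simp
qed

lemma braket_mult_resolution:
  assumes "ketbra p p + ketbra q q = mat 1"
  shows "braket u (A ** B) v = braket u A p * braket p B v + braket u A q * braket q B v"
proof -
  have "(ketbra p p + ketbra q q) $ i $ j = mat 1 $ i $ j" for i j
    using assms by simp
  then have "p $ i * cnj (p $ j) + q $ i * cnj (q $ j) = (if i = j then 1 else 0)" for i j
    unfolding ketbra_def mat_def by simp
  from this[of 1 1] this[of 1 2] this[of 2 1] this[of 2 2] show ?thesis
    unfolding braket_def by (simp add: matrix_vector_mult_def matrix_matrix_mult_def sum_2) algebra
qed

lemma ctrace_spectral_mult:
  "ctrace ((l1 *\<^sub>R ketbra p p + l2 *\<^sub>R ketbra q q) ** A)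
    = l1 * braket p A p + l2 * braket q A q"
  unfolding ctrace_def braket_def ketbra_def
  by (simp add: matrix_matrix_mult_def matrix_vector_mult_def sum_2)
    (simp add: scaleR_conv_of_real algebra_simps)

lemma msmean_idem:
  assumes "s \<le> 0" "0 \<le> a"
  shows "msmean s a a = a"
proof -
  consider "a = 0 \<or> s = -\<infinity> \<or> s = 0" | t where "s = ereal t" "t \<noteq> 0" "a > 0"
    using assms by (cases s; cases "a = 0") auto
  then show ?thesis
  proof cases
    case 1
    then show ?thesis using assms by (auto simp: msmean_def)
  next
    case 2
    then show ?thesis by (simp add: msmean_def powr_powr)
  qed
qed

lemma msmean_commute: "msmean s a b = msmean s b a"
  unfolding msmean_def by (simp add: add.commute mult.commute min.commute)

lemma msmean_between:
  assumes "s \<le> 0" "0 \<le> b" "b \<le> a"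
  shows "b \<le> msmean s a b \<and> msmean s a b \<le> a"
proof -
  consider "b = 0" | "b > 0" "s = -\<infinity>" | "b > 0" "s = 0"
    | t where "b > 0" "s = ereal t" "t < 0"
    using assms by (cases s; cases "b = 0"; cases "s = 0") auto
  then show ?thesis
  proof cases
    case 1
    then show ?thesis using assms by (simp add: msmean_def)
  next
    case 2
    then show ?thesis using assms by (simp add: msmean_def)
  next
    case 3
    have "b \<le> sqrt (a * b)"
      using 3 assms by (intro real_le_rsqrt) (simp add: power2_eq_square mult_right_mono)
    moreover have "sqrt (a * b) \<le> a"
      using 3 assms by (intro real_le_lsqrt) (simp_all add: power2_eq_square mult_left_mono)
    ultimately show ?thesis using 3 by (simp add: msmean_def)
  next
    case 4
    define M where "M = (a powr t + b powr t) / 2"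
    have "a powr t \<le> b powr t"
      using 4 assms by (simp add: powr_mono2')
    then have M: "a powr t \<le> M" "M \<le> b powr t" "0 < M"
      using 4 assms unfolding M_def by (auto intro: add_pos_pos)
    have "b = (b powr t) powr (1 / t)" and "a = (a powr t) powr (1 / t)"
      using 4 assms by (simp_all add: powr_powr)
    moreover have "(b powr t) powr (1 / t) \<le> M powr (1 / t)"
      and "M powr (1 / t) \<le> (a powr t) powr (1 / t)"
      using 4 assms M by (simp_all add: powr_mono2')
    moreover have "msmean s a b = M powr (1 / t)"
      using 4 assms unfolding M_def by (simp add: msmean_def)
    ultimately show ?thesis by simp
  qed
qed

definition offdiag_form :: "real \<Rightarrow> real \<Rightarrow> complex \<Rightarrow> complex \<Rightarrow> complex" where
  "offdiag_form a b u v = of_real a * u * cnj v + of_real b * cnj u * v"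

lemma Re_offdiag_form: "Re (offdiag_form a b u v) = (a + b) * Re (u * cnj v)"
  unfolding offdiag_form_def by (simp add: algebra_simps)

lemma Im_offdiag_form: "Im (offdiag_form a b u v) = (a - b) * Im (u * cnj v)"
  unfolding offdiag_form_def by (simp add: algebra_simps)

lemma Re_offdiag_form_diag: "Re (offdiag_form a b u u) = (a + b) * (cmod u)\<^sup>2"
  unfolding Re_offdiag_form by (simp add: complex_mult_cnj cmod_power2)

lemma offdiag_form_polarization:
  "of_real (Re (offdiag_form a b u v))
     = (offdiag_form a b (u + v) (u + v) - offdiag_form a b (u - v) (u - v)) / 4"
  unfolding offdiag_form_def by (simp add: complex_eq_iff algebra_simps)

lemma Re_offdiag_form_square_le:
  "(Re (offdiag_form a b u v))\<^sup>2 \<le> Re (offdiag_form a b u u) * Re (offdiag_form a b v v)"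
proof -
  define w where "w = u * cnj v"
  have "(Re w)\<^sup>2 \<le> (cmod w)\<^sup>2"
    by (simp add: cmod_power2)
  also have "\<dots> = (cmod u)\<^sup>2 * (cmod v)\<^sup>2"
    unfolding w_def by (simp add: norm_mult power_mult_distrib)
  finally have "(a + b)\<^sup>2 * (Re w)\<^sup>2 \<le> (a + b)\<^sup>2 * ((cmod u)\<^sup>2 * (cmod v)\<^sup>2)"
    by (rule mult_left_mono) simp
  then show ?thesis
    unfolding Re_offdiag_form_diag Re_offdiag_form w_def[symmetric]
    by (simp only: power_mult_distrib power2_eq_square[of "a + b"] mult_ac)
qed

lemma offdiag_form_diag_le_cmod_square:
  assumes "a * b \<le> 0"
  shows "Re (offdiag_form a b u u) * Re (offdiag_form a b v v)
    \<le> (cmod (offdiag_form a b u v))\<^sup>2"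
proof -
  define w where "w = u * cnj v"
  have "(a + b)\<^sup>2 \<le> (a - b)\<^sup>2"
    using assms by (simp add: power2_eq_square algebra_simps)
  then have "(a + b)\<^sup>2 * (Im w)\<^sup>2 \<le> (a - b)\<^sup>2 * (Im w)\<^sup>2"
    by (simp add: mult_right_mono)
  moreover have "(cmod u)\<^sup>2 * (cmod v)\<^sup>2 = (Re w)\<^sup>2 + (Im w)\<^sup>2"
    unfolding cmod_power2[symmetric] w_def by (simp add: norm_mult power_mult_distrib)
  ultimately show ?thesis
    unfolding cmod_power2[of "offdiag_form a b u v"] Re_offdiag_form_diag
      Re_offdiag_form Im_offdiag_form w_def[symmetric]
    by (simp only: power_mult_distrib) (simp add: algebra_simps power2_eq_square)
qed

lemma zeta_eigenbasis:
  assumes "s \<le> 0" "0 \<le> lam 2" "lam 2 \<le> lam 1"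
    and "hermitian2 A" "hermitian2 B"
    and resolution: "ketbra (psi 1) (psi 1) + ketbra (psi 2) (psi 2) = mat 1"
    and "\<rho> = lam 1 *\<^sub>R ketbra (psi 1) (psi 1) + lam 2 *\<^sub>R ketbra (psi 2) (psi 2)"
  shows "zeta s \<rho> lam psi A B
    = offdiag_form (lam 1 - msmean s (lam 1) (lam 2)) (lam 2 - msmean s (lam 1) (lam 2))
        (braket (psi 1) A (psi 2)) (braket (psi 1) B (psi 2))"
proof -
  have adj: "cadj A = A"
    using assms(4) unfolding hermitian2_def .
  have idem: "msmean s (lam 1) (lam 1) = lam 1" "msmean s (lam 2) (lam 2) = lam 2"
    using assms(1-3) by (simp_all add: msmean_idem)
  have swap: "braket (psi 2) A (psi 1) = cnj (braket (psi 1) A (psi 2))"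
    "braket (psi 2) B (psi 1) = cnj (braket (psi 1) B (psi 2))"
    using assms(4,5) by (simp_all only: braket_hermitian_swap[of _ "psi 2" "psi 1"])
  have sum12: "(\<Sum>i\<in>{1::nat, 2}. f i) = f 1 + (f 2 :: complex)" for f
    by simp
  have "ctrace (\<rho> ** cadj A ** B)
      = lam 1 * (braket (psi 1) A (psi 1) * braket (psi 1) B (psi 1)
                 + braket (psi 1) A (psi 2) * braket (psi 2) B (psi 1))
      + lam 2 * (braket (psi 2) A (psi 1) * braket (psi 1) B (psi 2)
                 + braket (psi 2) A (psi 2) * braket (psi 2) B (psi 2))"
    unfolding assms(7) adj matrix_mul_assoc[symmetric] ctrace_spectral_mult
      braket_mult_resolution[OF resolution] ..
  then show ?thesis
    unfolding zeta_def offdiag_form_def adj sum12 swap idem msmean_commute[of s "lam 2" "lam 1"]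
    by (simp add: algebra_simps)
qed

lemma ctrace_commutator_spectral:
  assumes "hermitian2 X" "hermitian2 Y" and resolution: "ketbra p p + ketbra q q = mat 1"
  shows "ctrace ((l1 *\<^sub>R ketbra p p + l2 *\<^sub>R ketbra q q) ** (X ** Y - Y ** X))
    = 2 * \<i> * of_real ((l1 - l2) * Im (braket p X q * cnj (braket p Y q)))"
proof -
  define u v where "u = braket p X q" and "v = braket p Y q"
  have swap: "braket q X p = cnj u" "braket q Y p = cnj v"
    using assms(1,2) unfolding u_def v_def by (simp_all only: braket_hermitian_swap[of _ q p])
  have "ctrace ((l1 *\<^sub>R ketbra p p + l2 *\<^sub>R ketbra q q) ** (X ** Y - Y ** X))
      = of_real l1 * (u * cnj v - v * cnj u) + of_real l2 * (cnj u * v - cnj v * u)"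
    unfolding ctrace_spectral_mult braket_diff braket_mult_resolution[OF resolution] swap
      u_def[symmetric] v_def[symmetric]
    by (simp add: algebra_simps)
  also have "\<dots> = 2 * \<i> * of_real ((l1 - l2) * Im (u * cnj v))"
    by (simp add: complex_eq_iff algebra_simps)
  finally show ?thesis
    unfolding u_def v_def .
qed

theorem theorem6:
  fixes s :: ereal and \<rho> X Y :: "complex^2^2"
    and lam :: "nat \<Rightarrow> real" and psi :: "nat \<Rightarrow> complex^2"
  assumes "s \<le> 0"
    and "density2 \<rho>"
    and "hermitian2 X" and "hermitian2 Y"
    and "\<forall>i\<in>{1,2}. \<forall>j\<in>{1,2::nat}. cinner2 (psi i) (psi j) = (if i = j then 1 else 0)"
    and "lam 1 \<ge> lam 2" and "lam 2 \<ge> 0"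
    and "\<rho> = lam 1 *\<^sub>R ketbra (psi 1) (psi 1) + lam 2 *\<^sub>R ketbra (psi 2) (psi 2)"
  shows "(Re (zeta s \<rho> lam psi X Y))\<^sup>2 \<le> Re (Is s \<rho> lam psi X) * Re (Is s \<rho> lam psi Y)
       \<and> Re (Is s \<rho> lam psi X) * Re (Is s \<rho> lam psi Y) \<le> (cmod (zeta s \<rho> lam psi X Y))\<^sup>2
       \<and> complex_of_real (Re (zeta s \<rho> lam psi X Y))
           = (Is s \<rho> lam psi (X + Y) - Is s \<rho> lam psi (X - Y)) / 4
       \<and> complex_of_real (Im (zeta s \<rho> lam psi X Y))
           = ctrace (\<rho> ** (X ** Y - Y ** X)) / (2 * \<i>)"
proof -
  have resolution: "ketbra (psi 1) (psi 1) + ketbra (psi 2) (psi 2) = mat 1"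
    using assms(5) by (intro ketbra_orthonormal_resolution) auto
  define m where "m = msmean s (lam 1) (lam 2)"
  define F where "F = offdiag_form (lam 1 - m) (lam 2 - m)"
  have sign: "(lam 1 - m) * (lam 2 - m) \<le> 0"
    using msmean_between[OF assms(1,7,6)] unfolding m_def by (simp add: mult_nonneg_nonpos)
  have zeta: "zeta s \<rho> lam psi A B = F (braket (psi 1) A (psi 2)) (braket (psi 1) B (psi 2))"
    if "hermitian2 A" "hermitian2 B" for A B
    using zeta_eigenbasis[OF assms(1,7,6) that resolution assms(8)] unfolding F_def m_def .
  define u v where "u = braket (psi 1) X (psi 2)" and "v = braket (psi 1) Y (psi 2)"
  have herm: "hermitian2 (X + Y)" "hermitian2 (X - Y)"
    using assms(3,4) by (simp_all add: hermitian2_add hermitian2_diff)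
  have Z: "zeta s \<rho> lam psi X Y = F u v"
    and I: "Is s \<rho> lam psi X = F u u" "Is s \<rho> lam psi Y = F v v"
      "Is s \<rho> lam psi (X + Y) = F (u + v) (u + v)"
      "Is s \<rho> lam psi (X - Y) = F (u - v) (u - v)"
    unfolding Is_def u_def v_def
    using zeta assms(3,4) herm by (simp_all add: braket_add braket_diff)
  have "ctrace (\<rho> ** (X ** Y - Y ** X)) / (2 * \<i>) = of_real (Im (F u v))"
    unfolding assms(8) ctrace_commutator_spectral[OF assms(3,4) resolution] F_def Im_offdiag_form
      u_def v_def by simp
  then show ?thesis
    unfolding Z I F_def
    using Re_offdiag_form_square_le offdiag_form_diag_le_cmod_square[OF sign]
      offdiag_form_polarization by simp
qed

end
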